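(* For disjunctive guarded systems of type $(A,B)$ and every LTL formula without the next operator $h(A,B_1)$: for all $n\ge1$, if $(A,B)^{(1,n)}\models\mathsf E_{uncond}\,h(A,B_1)$ then $(A,B)^{(1,n+1)}\models\mathsf E_{uncond}\,h(A,B_1)$.
   Context: A process template is $U=(Q_U,\mathit{init}_U,\Sigma_U,\delta_U)$ with finite states $Q_U$, initial state $\mathit{init}_U$, finite input alphabet $\Sigma_U$ and guarded transitions $\delta_U\subseteq Q_U\times\Sigma_U\times 2^{Q_A\cup Q_B}\times Q_U$; templates $A,B$ have disjoint state sets and disjoint alphabets, and $|B|=|Q_B|$. The system $(A,B)^{(1,n)}$ consists of one copy of $A$ and $n$ copies $B_1,\dots,B_n$ of $B$; a global state $s$ gives each process a local state, a global input $e$ gives each process an input letter, and initially all processes are in their initial states. In a disjunctive system a guard $g$ is satisfied for process $p$ in $s$ iff some process $p'\ne p$ has $s(p')\in g$. A local transition $(q,\sigma,g,q')$ of $p$ is enabled for $(s,e)$ if $s(p)=q$, $e(p)=\sigma$ and $g$ is satisfied for $p$ in $s$; a global step changes the state of exactly one process along an enabled transition. A path is a sequence of configurations $(s_1,e_1,p_1),(s_2,e_2,p_2),\dots$ where $p_t$ makes the step from $s_t$ to $s_{t+1}$ under $e_t$, a configuration $(s,e,\bot)$ occurs (as the last one) exactly when all processes are disabled, and $e_{t+1}(p)=e_t(p)$ for every process $p$ not moving at moment $t$. A run is a maximal path from the initial state. A run is unconditionally fair if it is infinite and every process moves infinitely often. For an LTL formula $h(A,B_1)$ without next operator over atomic propositions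 from $Q_A\cup\Sigma_A$ and $(Q_B\cup\Sigma_B)\times\{1\}$ (interpreted on the local states and inputs of $A$ and $B_1$), $(A,B)^{(1,n)}\models\mathsf E_{uncond}\,h(A,B_1)$ means some unconditionally fair run satisfies $h$. *)

theory Defs
  imports Main
begin

text \<open>Guards are sets of local states of
  either template; Q_A and Q_B are disjoint because they live in the two summands
  of the sum type 'qa + 'qb (similarly the alphabets live in distinct types).\<close>

record ('q, 's, 'g) template =
  states :: "'q set"
  init   :: "'q"
  alph   :: "'s set"
  trans  :: "('q \<times> 's \<times> 'g set \<times> 'q) set"

type_synonym ('qa, 'sa, 'qb) templA = "('qa, 'sa, 'qa + 'qb) template"
type_synonym ('qb, 'sb, 'qa) templB = "('qb, 'sb, 'qa + 'qb) template"

definition guard_states ::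
  "('qa, 'sa, 'qa + 'qb) template \<Rightarrow> ('qb, 'sb, 'qa + 'qb) template \<Rightarrow> ('qa + 'qb) set" where
  "guard_states A B = Inl ` states A \<union> Inr ` states B"

definition template_wf ::
  "('q, 's, 'g) template \<Rightarrow> 'g set \<Rightarrow> bool" where
  "template_wf U G \<longleftrightarrow> finite (states U) \<and> init U \<in> states U \<and> finite (alph U) \<and>
     trans U \<subseteq> states U \<times> alph U \<times> Pow G \<times> states U"

datatype proc = PA | PB nat

definition procs :: "nat \<Rightarrow> proc set" where
  "procs n = insert PA (PB ` {1..n})"

text \<open>Global state: local state of A and of every B_i; global input: letter of A
  and of every B_i. (Values at indices outside 1..n are irrelevant.)\<close>
type_synonym ('qa, 'qb) gstate = "'qa \<times> (nat \<Rightarrow> 'qb)"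
type_synonym ('sa, 'sb) ginput = "'sa \<times> (nat \<Rightarrow> 'sb)"

fun loc :: "('qa, 'qb) gstate \<Rightarrow> proc \<Rightarrow> 'qa + 'qb" where
  "loc s PA = Inl (fst s)"
| "loc s (PB i) = Inr (snd s i)"

fun inp :: "('sa, 'sb) ginput \<Rightarrow> proc \<Rightarrow> 'sa + 'sb" where
  "inp e PA = Inl (fst e)"
| "inp e (PB i) = Inr (snd e i)"

definition init_state ::
  "('qa, 'sa, 'qa + 'qb) template \<Rightarrow> ('qb, 'sb, 'qa + 'qb) template \<Rightarrow> ('qa, 'qb) gstate" where
  "init_state A B = (init A, \<lambda>_. init B)"

definition valid_input ::
  "('qa, 'sa, 'qa + 'qb) template \<Rightarrow> ('qb, 'sb, 'qa + 'qb) template \<Rightarrow> nat \<Rightarrow> ('sa, 'sb) ginput \<Rightarrow> bool" where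
  "valid_input A B n e \<longleftrightarrow> fst e \<in> alph A \<and> (\<forall>i\<in>{1..n}. snd e i \<in> alph B)"

definition guard_sat :: "nat \<Rightarrow> ('qa, 'qb) gstate \<Rightarrow> proc \<Rightarrow> ('qa + 'qb) set \<Rightarrow> bool" where
  "guard_sat n s p g \<longleftrightarrow> (\<exists>p'\<in>procs n. p' \<noteq> p \<and> loc s p' \<in> g)"

fun gstep ::
  "('qa, 'sa, 'qa + 'qb) template \<Rightarrow> ('qb, 'sb, 'qa + 'qb) template \<Rightarrow> nat \<Rightarrow>
   ('qa, 'qb) gstate \<Rightarrow> ('sa, 'sb) ginput \<Rightarrow> proc \<Rightarrow> ('qa, 'qb) gstate \<Rightarrow> bool" where
  "gstep A B n s e PA s' \<longleftrightarrow>
     (\<exists>g q'. (fst s, fst e, g, q') \<in> trans A \<and> guard_sat n s PA g \<and> s' = (q', snd s))"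
| "gstep A B n s e (PB i) s' \<longleftrightarrow> i \<in> {1..n} \<and>
     (\<exists>g q'. (snd s i, snd e i, g, q') \<in> trans B \<and> guard_sat n s (PB i) g \<and>
             s' = (fst s, (snd s)(i := q')))"

definition enabled ::
  "('qa, 'sa, 'qa + 'qb) template \<Rightarrow> ('qb, 'sb, 'qa + 'qb) template \<Rightarrow> nat \<Rightarrow>
   ('qa, 'qb) gstate \<Rightarrow> ('sa, 'sb) ginput \<Rightarrow> proc \<Rightarrow> bool" where
  "enabled A B n s e p \<longleftrightarrow> (\<exists>s'. gstep A B n s e p s')"

definition all_disabled ::
  "('qa, 'sa, 'qa + 'qb) template \<Rightarrow> ('qb, 'sb, 'qa + 'qb) template \<Rightarrow> nat \<Rightarrow>
   ('qa, 'qb) gstate \<Rightarrow> ('sa, 'sb) ginput \<Rightarrow> bool" where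
  "all_disabled A B n s e \<longleftrightarrow> (\<forall>p\<in>procs n. \<not> enabled A B n s e p)"

text \<open>Configurations (s, e, p) with p = None standing for \<bottom>.\<close>
type_synonym ('qa, 'sa, 'qb, 'sb) config = "('qa, 'qb) gstate \<times> ('sa, 'sb) ginput \<times> proc option"

definition cstate :: "('qa, 'sa, 'qb, 'sb) config \<Rightarrow> ('qa, 'qb) gstate" where
  "cstate c = fst c"
definition cinput :: "('qa, 'sa, 'qb, 'sb) config \<Rightarrow> ('sa, 'sb) ginput" where
  "cinput c = fst (snd c)"
definition cproc :: "('qa, 'sa, 'qb, 'sb) config \<Rightarrow> proc option" where
  "cproc c = snd (snd c)"

definition moves ::
  "('qa, 'sa, 'qa + 'qb) template \<Rightarrow> ('qb, 'sb, 'qa + 'qb) template \<Rightarrow> nat \<Rightarrow>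
   (nat \<Rightarrow> ('qa, 'sa, 'qb, 'sb) config) \<Rightarrow> nat \<Rightarrow> bool" where
  "moves A B n \<rho> t \<longleftrightarrow> (\<exists>p\<in>procs n. cproc (\<rho> t) = Some p \<and>
      gstep A B n (cstate (\<rho> t)) (cinput (\<rho> t)) p (cstate (\<rho> (Suc t))) \<and>
      (\<forall>q\<in>procs n. q \<noteq> p \<longrightarrow> inp (cinput (\<rho> (Suc t))) q = inp (cinput (\<rho> t)) q))"

text \<open>A run: a maximal path from the initial state. It is either infinite (every
  configuration has a moving process), or finite, ending (at position k) with a
  configuration (s, e, \<bottom>) in which all processes are disabled; positions after k
  are irrelevant.\<close>
definition is_run ::
  "('qa, 'sa, 'qa + 'qb) template \<Rightarrow> ('qb, 'sb, 'qa + 'qb) template \<Rightarrow> nat \<Rightarrow>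
   (nat \<Rightarrow> ('qa, 'sa, 'qb, 'sb) config) \<Rightarrow> bool" where
  "is_run A B n \<rho> \<longleftrightarrow> cstate (\<rho> 0) = init_state A B \<and>
     ((\<forall>t. valid_input A B n (cinput (\<rho> t)) \<and> moves A B n \<rho> t) \<or>
      (\<exists>k. cproc (\<rho> k) = None \<and> all_disabled A B n (cstate (\<rho> k)) (cinput (\<rho> k)) \<and>
           (\<forall>t\<le>k. valid_input A B n (cinput (\<rho> t))) \<and>
           (\<forall>t<k. moves A B n \<rho> t)))"

definition uncond_fair :: "nat \<Rightarrow> (nat \<Rightarrow> ('qa, 'sa, 'qb, 'sb) config) \<Rightarrow> bool" where
  "uncond_fair n \<rho> \<longleftrightarrow> (\<forall>t. cproc (\<rho> t) \<noteq> None) \<and>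
     (\<forall>p\<in>procs n. \<exists>\<^sub>\<infinity>t. cproc (\<rho> t) = Some p)"

datatype ('qa, 'sa, 'qb, 'sb) atom =
    AState 'qa | AInput 'sa | B1State 'qb | B1Input 'sb

datatype 'ap ltlx =
    LTrue
  | Atom 'ap
  | Neg "'ap ltlx"
  | Conj "'ap ltlx" "'ap ltlx"
  | Until "'ap ltlx" "'ap ltlx"

fun atom_holds :: "('qa, 'sa, 'qb, 'sb) atom \<Rightarrow> ('qa, 'sa, 'qb, 'sb) config \<Rightarrow> bool" where
  "atom_holds (AState q) c \<longleftrightarrow> fst (cstate c) = q"
| "atom_holds (AInput a) c \<longleftrightarrow> fst (cinput c) = a"
| "atom_holds (B1State q) c \<longleftrightarrow> snd (cstate c) 1 = q"
| "atom_holds (B1Input a) c \<longleftrightarrow> snd (cinput c) 1 = a"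

fun ltl_sat :: "(nat \<Rightarrow> ('qa, 'sa, 'qb, 'sb) config) \<Rightarrow> nat \<Rightarrow>
                 ('qa, 'sa, 'qb, 'sb) atom ltlx \<Rightarrow> bool" where
  "ltl_sat \<rho> i LTrue = True"
| "ltl_sat \<rho> i (Atom a) = atom_holds a (\<rho> i)"
| "ltl_sat \<rho> i (Neg \<phi>) = (\<not> ltl_sat \<rho> i \<phi>)"
| "ltl_sat \<rho> i (Conj \<phi> \<psi>) = (ltl_sat \<rho> i \<phi> \<and> ltl_sat \<rho> i \<psi>)"
| "ltl_sat \<rho> i (Until \<phi> \<psi>) = (\<exists>j\<ge>i. ltl_sat \<rho> j \<psi> \<and> (\<forall>k. i \<le> k \<and> k < j \<longrightarrow> ltl_sat \<rho> k \<phi>))"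

definition models_E_uncond ::
  "('qa, 'sa, 'qa + 'qb) template \<Rightarrow> ('qb, 'sb, 'qa + 'qb) template \<Rightarrow> nat \<Rightarrow>
   ('qa, 'sa, 'qb, 'sb) atom ltlx \<Rightarrow> bool" where
  "models_E_uncond A B n h \<longleftrightarrow> (\<exists>\<rho>. is_run A B n \<rho> \<and> uncond_fair n \<rho> \<and> ltl_sat \<rho> 0 h)"

end

theory Submission
  imports Defs
begin

text \<open>Add a process B_(n+1) that shadows B_1: it starts in the same state and
  repeats every step of B_1 immediately afterwards, with the same input letter. Disjunctive
  guards only become easier to satisfy when a process is added, and when B_(n+1) repeats
  B_1's step, the processes that witnessed B_1's guard are still in place. So every
  unconditionally fair run of (A,B)^(1,n) yields one of (A,B)^(1,n+1) whose
  projection to A and B_1 is the original one with some configurations repeated; LTL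
  without next cannot observe such stuttering.\<close>

lemma mono_unit_steps_attains:
  fixes \<pi> :: "nat \<Rightarrow> nat"
  assumes "mono \<pi>" and "\<And>j. \<pi> (Suc j) \<le> Suc (\<pi> j)"
    and "\<pi> j \<le> u" and "u < \<pi> j'"
  shows "\<exists>k. j \<le> k \<and> k < j' \<and> \<pi> k = u"
  using assms(4)
proof (induction j')
  case 0
  then show ?case using monoD[OF \<open>mono \<pi>\<close>, of 0 j] \<open>\<pi> j \<le> u\<close> by simp
next
  case (Suc j')
  show ?case
  proof (cases "u < \<pi> j'")
    case True
    then show ?thesis using Suc.IH less_SucI by blast
  next
    case False
    then have "u = \<pi> j'" using Suc.prems assms(2)[of j'] by simp
    moreover have "j \<le> j'"
    proof (rule ccontr)
      assume "\<not> j \<le> j'"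
      then have "\<pi> (Suc j') \<le> \<pi> j" using \<open>mono \<pi>\<close> by (simp add: monoD)
      then show False using Suc.prems \<open>\<pi> j \<le> u\<close> by simp
    qed
    ultimately show ?thesis by auto
  qed
qed

lemma ltl_sat_stutter:
  fixes \<pi> :: "nat \<Rightarrow> nat"
  assumes mono: "mono \<pi>" and unit_steps: "\<And>j. \<pi> (Suc j) \<le> Suc (\<pi> j)" and "surj \<pi>"
    and atoms: "\<And>j a. atom_holds a (\<rho>' j) = atom_holds a (\<rho> (\<pi> j))"
  shows "ltl_sat \<rho>' j \<phi> \<longleftrightarrow> ltl_sat \<rho> (\<pi> j) \<phi>"
proof (induction \<phi> arbitrary: j)
  case (Until \<phi> \<psi>)
  show ?case
  proof
    assume "ltl_sat \<rho>' j (Until \<phi> \<psi>)"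
    then obtain j' where "j \<le> j'" "ltl_sat \<rho>' j' \<psi>"
      and before: "\<And>k. j \<le> k \<Longrightarrow> k < j' \<Longrightarrow> ltl_sat \<rho>' k \<phi>" by auto
    have "\<pi> j \<le> \<pi> j'" using \<open>j \<le> j'\<close> mono by (simp add: monoD)
    moreover have "ltl_sat \<rho> (\<pi> j') \<psi>" using \<open>ltl_sat \<rho>' j' \<psi>\<close> Until.IH by simp
    moreover have "ltl_sat \<rho> u \<phi>" if u: "\<pi> j \<le> u" "u < \<pi> j'" for u
    proof -
      obtain k where "j \<le> k" "k < j'" "\<pi> k = u"
        using mono_unit_steps_attains[OF mono unit_steps u] by blast
      then show ?thesis using before Until.IH by auto
    qed
    ultimately show "ltl_sat \<rho> (\<pi> j) (Until \<phi> \<psi>)" by auto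
  next
    assume "ltl_sat \<rho> (\<pi> j) (Until \<phi> \<psi>)"
    then obtain u where "\<pi> j \<le> u" "ltl_sat \<rho> u \<psi>"
      and before: "\<And>k. \<pi> j \<le> k \<Longrightarrow> k < u \<Longrightarrow> ltl_sat \<rho> k \<phi>" by auto
    have "\<exists>j'. j \<le> j' \<and> \<pi> j' = u"
    proof -
      obtain j0 where "\<pi> j0 = u" using \<open>surj \<pi>\<close> by (metis surjD)
      show ?thesis
      proof (cases "j \<le> j0")
        case False
        then have "\<pi> j0 \<le> \<pi> j" using mono by (simp add: monoD)
        then show ?thesis using \<open>\<pi> j0 = u\<close> \<open>\<pi> j \<le> u\<close> by auto
      qed (use \<open>\<pi> j0 = u\<close> in blast)
    qed
    define j' where "j' = (LEAST j'. j \<le> j' \<and> \<pi> j' = u)"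
    have j': "j \<le> j'" "\<pi> j' = u"
      using LeastI_ex[OF \<open>\<exists>j'. j \<le> j' \<and> \<pi> j' = u\<close>] unfolding j'_def by auto
    have "ltl_sat \<rho>' k \<phi>" if "j \<le> k" "k < j'" for k
    proof -
      have "\<pi> k \<noteq> u" using that not_less_Least unfolding j'_def by blast
      moreover have "\<pi> j \<le> \<pi> k" "\<pi> k \<le> \<pi> j'" using that mono by (auto simp: monoD)
      ultimately show ?thesis using before j' Until.IH by simp
    qed
    then show "ltl_sat \<rho>' j (Until \<phi> \<psi>)"
      using j' \<open>ltl_sat \<rho> u \<psi>\<close> Until.IH by auto
  qed
qed (simp_all add: atoms)

lemma procs_Suc: "procs (Suc n) = insert (PB (Suc n)) (procs n)"
  by (auto simp: procs_def)

lemma PB_in_procs_iff: "PB i \<in> procs n \<longleftrightarrow> 1 \<le> i \<and> i \<le> n"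
  by (auto simp: procs_def)

lemma guard_sat_transfer:
  assumes "guard_sat n s p g"
    and "\<And>p'. p' \<in> procs n \<Longrightarrow> p' \<noteq> p \<Longrightarrow> p' \<in> procs m \<and> p' \<noteq> p2 \<and> loc s2 p' = loc s p'"
  shows "guard_sat m s2 p2 g"
  using assms unfolding guard_sat_def by fastforce

definition config_step ::
  "('qa, 'sa, 'qa + 'qb) template \<Rightarrow> ('qb, 'sb, 'qa + 'qb) template \<Rightarrow> nat \<Rightarrow>
   ('qa, 'sa, 'qb, 'sb) config \<Rightarrow> ('qa, 'sa, 'qb, 'sb) config \<Rightarrow> bool" where
  "config_step A B n c c' \<longleftrightarrow> (\<exists>p\<in>procs n. cproc c = Some p \<and>
      gstep A B n (cstate c) (cinput c) p (cstate c') \<and>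
      (\<forall>q\<in>procs n. q \<noteq> p \<longrightarrow> inp (cinput c') q = inp (cinput c) q))"

lemma moves_iff_config_step: "moves A B n \<rho> t \<longleftrightarrow> config_step A B n (\<rho> t) (\<rho> (Suc t))"
  by (simp add: moves_def config_step_def)

lemma fair_run_infinite:
  assumes "is_run A B n \<rho>" and "uncond_fair n \<rho>"
  shows "valid_input A B n (cinput (\<rho> t))" and "config_step A B n (\<rho> t) (\<rho> (Suc t))"
proof -
  have "cproc (\<rho> k) \<noteq> None" for k
    using \<open>uncond_fair n \<rho>\<close> by (simp add: uncond_fair_def)
  then have "\<forall>t. valid_input A B n (cinput (\<rho> t)) \<and> moves A B n \<rho> t"
    using \<open>is_run A B n \<rho>\<close> unfolding is_run_def by blast
  then show "valid_input A B n (cinput (\<rho> t))" and "config_step A B n (\<rho> t) (\<rho> (Suc t))"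
    by (simp_all add: moves_iff_config_step)
qed

definition shadow :: "nat \<Rightarrow> 'a \<times> (nat \<Rightarrow> 'b) \<Rightarrow> 'a \<times> (nat \<Rightarrow> 'b) \<Rightarrow> 'a \<times> (nat \<Rightarrow> 'b)" where
  "shadow n x y = (fst y, (snd y)(Suc n := snd x 1))"

lemma loc_shadow: "p \<in> procs n \<Longrightarrow> loc (shadow n x y) p = loc y p"
  by (cases p) (auto simp: shadow_def PB_in_procs_iff)

lemma inp_shadow: "p \<in> procs n \<Longrightarrow> inp (shadow n x y) p = inp y p"
  by (cases p) (auto simp: shadow_def PB_in_procs_iff)

lemma valid_input_shadow:
  assumes "valid_input A B n x" and "valid_input A B n y" and "n \<ge> 1"
  shows "valid_input A B (Suc n) (shadow n x y)"
  using assms by (auto simp: valid_input_def shadow_def)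

definition dup_config :: "nat \<Rightarrow> ('qa, 'sa, 'qb, 'sb) config \<Rightarrow> ('qa, 'sa, 'qb, 'sb) config" where
  "dup_config n c = (shadow n (cstate c) (cstate c), shadow n (cinput c) (cinput c), cproc c)"

definition catch_up_config ::
  "nat \<Rightarrow> ('qa, 'sa, 'qb, 'sb) config \<Rightarrow> ('qa, 'sa, 'qb, 'sb) config \<Rightarrow> ('qa, 'sa, 'qb, 'sb) config" where
  "catch_up_config n c c' =
     (shadow n (cstate c) (cstate c'), shadow n (cinput c) (cinput c'), Some (PB (Suc n)))"

lemma dup_config_simps [simp]:
  "cstate (dup_config n c) = shadow n (cstate c) (cstate c)"
  "cinput (dup_config n c) = shadow n (cinput c) (cinput c)"
  "cproc (dup_config n c) = cproc c"
  by (simp_all add: dup_config_def cstate_def cinput_def cproc_def)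

lemma catch_up_config_simps [simp]:
  "cstate (catch_up_config n c c') = shadow n (cstate c) (cstate c')"
  "cinput (catch_up_config n c c') = shadow n (cinput c) (cinput c')"
  "cproc (catch_up_config n c c') = Some (PB (Suc n))"
  by (simp_all add: catch_up_config_def cstate_def cinput_def cproc_def)

lemma config_step_dup_other:
  assumes step: "config_step A B n c c'" and not_B1: "cproc c \<noteq> Some (PB 1)" and "n \<ge> 1"
  shows "config_step A B (Suc n) (dup_config n c) (dup_config n c')"
proof -
  obtain p where p: "p \<in> procs n" "cproc c = Some p" "p \<noteq> PB 1"
    and gstep: "gstep A B n (cstate c) (cinput c) p (cstate c')"
    and inputs: "\<forall>q\<in>procs n. q \<noteq> p \<longrightarrow> inp (cinput c') q = inp (cinput c) q"
    using step not_B1 unfolding config_step_def by auto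
  let ?s = "cstate c" and ?e = "cinput c"
  have guard: "guard_sat (Suc n) (shadow n ?s ?s) p g" if "guard_sat n ?s p g" for g
    using that by (rule guard_sat_transfer) (auto simp: procs_Suc loc_shadow)
  have "gstep A B (Suc n) (shadow n ?s ?s) (shadow n ?e ?e) p (shadow n (cstate c') (cstate c'))"
  proof (cases p)
    case PA
    then show ?thesis using gstep guard by (auto simp: shadow_def)
  next
    case (PB i)
    then obtain g q' where "(snd ?s i, snd ?e i, g, q') \<in> trans B" "guard_sat n ?s (PB i) g"
      and "cstate c' = (fst ?s, (snd ?s)(i := q'))" "1 \<le> i" "i \<le> n"
      using gstep by auto
    moreover have "i \<noteq> 1" "i \<noteq> Suc n" using PB p \<open>i \<le> n\<close> by auto
    ultimately show ?thesis using PB guard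
      by (auto simp: shadow_def fun_upd_twist intro!: exI[of _ g] exI[of _ q'])
  qed
  moreover have "inp (shadow n (cinput c') (cinput c')) q = inp (shadow n ?e ?e) q"
    if "q \<in> procs (Suc n)" "q \<noteq> p" for q
  proof (cases "q = PB (Suc n)")
    case True
    have "PB 1 \<in> procs n" using \<open>n \<ge> 1\<close> by (simp add: PB_in_procs_iff)
    then show ?thesis using True inputs p by (force simp: shadow_def)
  qed (use that inputs in \<open>auto simp: procs_Suc inp_shadow\<close>)
  moreover have "p \<in> procs (Suc n)" using p(1) by (simp add: procs_Suc)
  ultimately show ?thesis
    using p(2) unfolding config_step_def by auto
qed

lemma config_step_dup_B1:
  assumes step: "config_step A B n c c'" and B1: "cproc c = Some (PB 1)" and "n \<ge> 1"
  shows "config_step A B (Suc n) (dup_config n c) (catch_up_config n c c')"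
proof -
  let ?s = "cstate c" and ?e = "cinput c"
  obtain g q' where "(snd ?s 1, snd ?e 1, g, q') \<in> trans B" "guard_sat n ?s (PB 1) g"
    and s': "cstate c' = (fst ?s, (snd ?s)(1 := q'))"
    and inputs: "\<forall>q\<in>procs n. q \<noteq> PB 1 \<longrightarrow> inp (cinput c') q = inp ?e q"
    using step B1 unfolding config_step_def by auto
  moreover have "guard_sat (Suc n) (shadow n ?s ?s) (PB 1) g"
    using \<open>guard_sat n ?s (PB 1) g\<close>
    by (rule guard_sat_transfer) (auto simp: procs_Suc loc_shadow)
  ultimately have "gstep A B (Suc n) (shadow n ?s ?s) (shadow n ?e ?e) (PB 1) (shadow n ?s (cstate c'))"
    using \<open>n \<ge> 1\<close> by (auto simp: shadow_def fun_upd_twist)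
  moreover have "inp (shadow n ?e (cinput c')) q = inp (shadow n ?e ?e) q"
    if "q \<in> procs (Suc n)" "q \<noteq> PB 1" for q
  proof (cases "q = PB (Suc n)")
    case False
    then have "q \<in> procs n" using that by (simp add: procs_Suc)
    then show ?thesis using that inputs by (simp add: inp_shadow)
  qed (simp add: shadow_def)
  ultimately show ?thesis
    using B1 \<open>n \<ge> 1\<close> unfolding config_step_def by (auto simp: PB_in_procs_iff)
qed

text \<open>B_(n+1) may take B_1's transition because only B_1 has moved since it was enabled,
  and B_1 never witnesses its own guard.\<close>
lemma config_step_catch_up:
  assumes step: "config_step A B n c c'" and B1: "cproc c = Some (PB 1)" and "n \<ge> 1"
  shows "config_step A B (Suc n) (catch_up_config n c c') (dup_config n c')"
proof -
  let ?s = "cstate c" and ?e = "cinput c"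
  obtain g q' where "(snd ?s 1, snd ?e 1, g, q') \<in> trans B" "guard_sat n ?s (PB 1) g"
    and s': "cstate c' = (fst ?s, (snd ?s)(1 := q'))"
    using step B1 unfolding config_step_def by auto
  moreover have "guard_sat (Suc n) (shadow n ?s (cstate c')) (PB (Suc n)) g"
    using \<open>guard_sat n ?s (PB 1) g\<close>
  proof (rule guard_sat_transfer)
    fix p' assume "p' \<in> procs n" "p' \<noteq> PB 1"
    then show "p' \<in> procs (Suc n) \<and> p' \<noteq> PB (Suc n) \<and> loc (shadow n ?s (cstate c')) p' = loc ?s p'"
      using s' by (cases p') (auto simp: procs_Suc PB_in_procs_iff shadow_def)
  qed
  ultimately have "gstep A B (Suc n) (shadow n ?s (cstate c')) (shadow n ?e (cinput c')) (PB (Suc n))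
      (shadow n (cstate c') (cstate c'))"
    using \<open>n \<ge> 1\<close> by (auto simp: shadow_def)
  moreover have "inp (shadow n (cinput c') (cinput c')) q = inp (shadow n ?e (cinput c')) q"
    if "q \<noteq> PB (Suc n)" for q
    using that by (cases q) (auto simp: shadow_def)
  ultimately show ?thesis
    unfolding config_step_def by (auto simp: procs_Suc)
qed

text \<open>Position j of the shadowing run corresponds to position t of the original run;
  the flag is set when B_1 has taken its step at t and B_(n+1) has yet to repeat it.\<close>
fun shadow_index :: "(nat \<Rightarrow> ('qa, 'sa, 'qb, 'sb) config) \<Rightarrow> nat \<Rightarrow> nat \<times> bool" where
  "shadow_index \<rho> 0 = (0, False)"
| "shadow_index \<rho> (Suc j) = (case shadow_index \<rho> j of
      (t, False) \<Rightarrow> if cproc (\<rho> t) = Some (PB 1) then (t, True) else (Suc t, False)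
    | (t, True) \<Rightarrow> (Suc t, False))"

definition shadow_run :: "nat \<Rightarrow> (nat \<Rightarrow> ('qa, 'sa, 'qb, 'sb) config) \<Rightarrow> nat \<Rightarrow> ('qa, 'sa, 'qb, 'sb) config" where
  "shadow_run n \<rho> j = (case shadow_index \<rho> j of
      (t, False) \<Rightarrow> dup_config n (\<rho> t)
    | (t, True) \<Rightarrow> catch_up_config n (\<rho> t) (\<rho> (Suc t)))"

definition shadow_origin :: "(nat \<Rightarrow> ('qa, 'sa, 'qb, 'sb) config) \<Rightarrow> nat \<Rightarrow> nat" where
  "shadow_origin \<rho> j = (case shadow_index \<rho> j of (t, b) \<Rightarrow> if b then Suc t else t)"

lemma shadow_index_le: "fst (shadow_index \<rho> j) \<le> j"
  by (induction j) (auto split: prod.splits bool.splits)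

lemma shadow_index_True_B1: "shadow_index \<rho> j = (t, True) \<Longrightarrow> cproc (\<rho> t) = Some (PB 1)"
  by (induction j) (auto split: prod.splits bool.splits if_splits)

lemma shadow_index_reaches: "\<exists>j. shadow_index \<rho> j = (t, False)"
proof (induction t)
  case 0
  have "shadow_index \<rho> 0 = (0, False)" by simp
  then show ?case by blast
next
  case (Suc t)
  then obtain j where j: "shadow_index \<rho> j = (t, False)" by blast
  show ?case
  proof (cases "cproc (\<rho> t) = Some (PB 1)")
    case True
    then have "shadow_index \<rho> (Suc (Suc j)) = (Suc t, False)" using j by simp
    then show ?thesis by blast
  next
    case False
    then have "shadow_index \<rho> (Suc j) = (Suc t, False)" using j by simp
    then show ?thesis by blast
  qed
qed

lemma shadow_index_reaches_True:
  assumes "cproc (\<rho> t) = Some (PB 1)"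
  shows "\<exists>j. shadow_index \<rho> j = (t, True)"
proof -
  obtain j where "shadow_index \<rho> j = (t, False)" using shadow_index_reaches by blast
  then have "shadow_index \<rho> (Suc j) = (t, True)" using assms by simp
  then show ?thesis by blast
qed

lemma shadow_origin_Suc:
  "shadow_origin \<rho> (Suc j) = shadow_origin \<rho> j \<or> shadow_origin \<rho> (Suc j) = Suc (shadow_origin \<rho> j)"
  by (auto simp: shadow_origin_def split: prod.splits bool.splits)

lemma mono_shadow_origin: "mono (shadow_origin \<rho>)"
  unfolding mono_iff_le_Suc using shadow_origin_Suc by (metis le_SucI order_refl)

lemma surj_shadow_origin: "surj (shadow_origin \<rho>)"
proof -
  have "t \<in> range (shadow_origin \<rho>)" for t
  proof -
    obtain j where "shadow_index \<rho> j = (t, False)" using shadow_index_reaches by blast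
    then have "shadow_origin \<rho> j = t" by (simp add: shadow_origin_def)
    then show ?thesis by (metis rangeI)
  qed
  then show ?thesis by blast
qed

lemma ltl_sat_shadow_run:
  assumes "n \<ge> 1"
  shows "ltl_sat (shadow_run n \<rho>) j \<phi> \<longleftrightarrow> ltl_sat \<rho> (shadow_origin \<rho> j) \<phi>"
proof (rule ltl_sat_stutter[OF mono_shadow_origin _ surj_shadow_origin])
  show "shadow_origin \<rho> (Suc j) \<le> Suc (shadow_origin \<rho> j)" for j
    using shadow_origin_Suc[of \<rho> j] by auto
  show "atom_holds a (shadow_run n \<rho> j) = atom_holds a (\<rho> (shadow_origin \<rho> j))" for j a
    using assms by (cases a) (auto simp: shadow_run_def shadow_origin_def shadow_def
        split: prod.splits bool.splits)
qed

lemma shadow_run_config_step: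
  assumes steps: "\<And>t. config_step A B n (\<rho> t) (\<rho> (Suc t))" and "n \<ge> 1"
  shows "config_step A B (Suc n) (shadow_run n \<rho> j) (shadow_run n \<rho> (Suc j))"
proof (cases "shadow_index \<rho> j")
  case (Pair t b)
  show ?thesis
  proof (cases b)
    case True
    then show ?thesis
      using Pair shadow_index_True_B1[of \<rho> j t] config_step_catch_up[OF steps _ \<open>n \<ge> 1\<close>]
      by (simp add: shadow_run_def)
  next
    case False
    then show ?thesis
      using Pair config_step_dup_B1[OF steps _ \<open>n \<ge> 1\<close>] config_step_dup_other[OF steps _ \<open>n \<ge> 1\<close>]
      by (simp add: shadow_run_def)
  qed
qed

lemma is_run_shadow_run:
  assumes run: "is_run A B n \<rho>" and fair: "uncond_fair n \<rho>" and "n \<ge> 1"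
  shows "is_run A B (Suc n) (shadow_run n \<rho>)"
proof -
  have "cstate (shadow_run n \<rho> 0) = init_state A B"
    using run by (auto simp: is_run_def shadow_run_def shadow_def init_state_def)
  moreover have "valid_input A B (Suc n) (cinput (shadow_run n \<rho> j))" for j
  proof -
    have valid: "valid_input A B n (cinput (\<rho> t))" for t
      using fair_run_infinite(1)[OF run fair] .
    show ?thesis
      using valid_input_shadow[OF valid valid \<open>n \<ge> 1\<close>]
      by (simp add: shadow_run_def split: prod.split bool.split)
  qed
  moreover have "moves A B (Suc n) (shadow_run n \<rho>) j" for j
    using shadow_run_config_step[of A B n \<rho>, OF fair_run_infinite(2)[OF run fair] \<open>n \<ge> 1\<close>]
    by (simp add: moves_iff_config_step)
  ultimately show ?thesis by (simp add: is_run_def)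
qed

lemma cproc_shadow_run:
  "cproc (shadow_run n \<rho> j) =
     (case shadow_index \<rho> j of (t, False) \<Rightarrow> cproc (\<rho> t) | (t, True) \<Rightarrow> Some (PB (Suc n)))"
  by (auto simp: shadow_run_def split: prod.splits bool.splits)

lemma uncond_fair_shadow_run:
  assumes fair: "uncond_fair n \<rho>" and "n \<ge> 1"
  shows "uncond_fair (Suc n) (shadow_run n \<rho>)"
proof -
  have never_None: "cproc (\<rho> t) \<noteq> None" for t
    using fair by (simp add: uncond_fair_def)
  have often: "\<forall>m. \<exists>t\<ge>m. cproc (\<rho> t) = Some p" if "p \<in> procs n" for p
    using fair that by (simp add: uncond_fair_def cofinite_eq_sequentially frequently_sequentially)
  have "\<exists>j\<ge>m. cproc (shadow_run n \<rho> j) = Some p" if p: "p \<in> procs (Suc n)" for p m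
  proof (cases "p = PB (Suc n)")
    case True
    obtain t where "t \<ge> m" "cproc (\<rho> t) = Some (PB 1)"
      using often[of "PB 1"] \<open>n \<ge> 1\<close> by (auto simp: PB_in_procs_iff)
    moreover obtain j where "shadow_index \<rho> j = (t, True)"
      using shadow_index_reaches_True[of \<rho> t] \<open>cproc (\<rho> t) = Some (PB 1)\<close> by blast
    ultimately show ?thesis
      using True shadow_index_le[of \<rho> j] by (auto simp: cproc_shadow_run intro!: exI[of _ j])
  next
    case False
    then obtain t where "t \<ge> m" "cproc (\<rho> t) = Some p"
      using often[of p] p by (auto simp: procs_Suc)
    moreover obtain j where "shadow_index \<rho> j = (t, False)"
      using shadow_index_reaches by blast
    ultimately show ?thesis
      using shadow_index_le[of \<rho> j] by (auto simp: cproc_shadow_run intro!: exI[of _ j])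
  qed
  moreover have "cproc (shadow_run n \<rho> j) \<noteq> None" for j
    using never_None by (auto simp: cproc_shadow_run split: prod.splits bool.splits)
  ultimately show ?thesis
    by (simp add: uncond_fair_def cofinite_eq_sequentially frequently_sequentially)
qed

theorem mainTheorem6:
  fixes A :: "('qa, 'sa, 'qa + 'qb) template"
    and B :: "('qb, 'sb, 'qa + 'qb) template"
    and h :: "('qa, 'sa, 'qb, 'sb) atom ltlx"
    and n :: nat
  assumes "template_wf A (guard_states A B)"
    and "template_wf B (guard_states A B)"
    and "n \<ge> 1"
    and "models_E_uncond A B n h"
  shows "models_E_uncond A B (n + 1) h"
proof -
  obtain \<rho> where run: "is_run A B n \<rho>" and fair: "uncond_fair n \<rho>" and sat: "ltl_sat \<rho> 0 h"
    using \<open>models_E_uncond A B n h\<close> unfolding models_E_uncond_def by blast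
  have "shadow_origin \<rho> 0 = 0" by (simp add: shadow_origin_def)
  then have "ltl_sat (shadow_run n \<rho>) 0 h"
    using sat ltl_sat_shadow_run[OF \<open>n \<ge> 1\<close>, of \<rho> 0 h] by simp
  moreover have "is_run A B (Suc n) (shadow_run n \<rho>)"
    using is_run_shadow_run[OF run fair \<open>n \<ge> 1\<close>] .
  moreover have "uncond_fair (Suc n) (shadow_run n \<rho>)"
    using uncond_fair_shadow_run[OF fair \<open>n \<ge> 1\<close>] .
  ultimately show ?thesis unfolding models_E_uncond_def by auto
qed

end
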